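(* Let $\mathcal{H},\mathcal{K}$ be complex Hilbert spaces of dimension greater than $2$, and let $(f_*,f^* ):(\mathsf{P}(\mathcal{H}),\mathsf{L}(\mathcal{H}),\bar e_{\mathcal{H}})\to(\mathsf{P}(\mathcal{K}),\mathsf{L}(\mathcal{K}),\bar e_{\mathcal{K}})$ be a Chu morphism with $f_*$ injective. Then there is a semiunitary $U:\mathcal{H}\to\mathcal{K}$ such that $f_*=\mathsf{P}(U)$, i.e. $f_*([\psi])=[U\psi]$ for all nonzero $\psi\in\mathcal{H}$. Moreover $U$ is unique up to multiplication by a scalar of modulus $1$.
   Context: A Chu space over $[0,1]$ is a triple $(X,A,e)$ with $e:X\times A\to[0,1]$; a Chu morphism $(X,A,e)\to(X',A',e')$ is a pair $(f_*:X\to X',\,f^*:A'\to A)$ with $e(x,f^*(a'))=e'(f_*(x),a')$ for all $x,a'$. For a complex Hilbert space $\mathcal{H}$: $\mathsf{L}(\mathcal{H})$ is the set of closed subspaces, $P_S$ the orthogonal projector onto $S$, $\mathsf{P}(\mathcal{H})$ the set of rays $[\psi]=\{\lambda\psi:\lambda\in\mathbb{C}\}$ with $\psi\ne0$, and $\bar e_{\mathcal{H}}([\psi],S)=\|P_S\psi\|^2/\|\psi\|^2$. A map $U:\mathcal{H}\to\mathcal{K}$ is semiunitary if it is a bijection with $U(\phi+\psi)=U\phi+U\psi$, $U(\lambda\phi)=\sigma(\lambda)U\phi$, $\langle U\phi,U\psi\rangle=\sigma(\langle\phi,\psi\rangle)$, where $\sigma$ is the identity or complex conjugation. *)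

theory Defs
  imports "HOL-Analysis.Analysis"
begin

class complex_inner = real_normed_vector +
  fixes scaleC :: "complex \<Rightarrow> 'a \<Rightarrow> 'a"
    and cinner :: "'a \<Rightarrow> 'a \<Rightarrow> complex"
  assumes scaleC_add_right: "scaleC c (x + y) = scaleC c x + scaleC c y"
    and scaleC_add_left: "scaleC (b + c) x = scaleC b x + scaleC c x"
    and scaleC_scaleC: "scaleC b (scaleC c x) = scaleC (b * c) x"
    and scaleC_one: "scaleC 1 x = x"
    and scaleR_scaleC: "scaleR r x = scaleC (complex_of_real r) x"
    and cinner_add_left: "cinner (x + y) z = cinner x z + cinner y z"
    and cinner_scaleC_left: "cinner (scaleC c x) y = cnj c * cinner x y"
    and cinner_commute: "cinner x y = cnj (cinner y x)"
    and cinner_ge_zero: "0 \<le> Re (cinner x x)"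
    and cinner_eq_zero_iff: "cinner x x = 0 \<longleftrightarrow> x = 0"
    and norm_eq_sqrt_cinner: "norm x = sqrt (Re (cinner x x))"

class chilbert = complex_inner + complete_space

definition csubspace :: "'a::complex_inner set \<Rightarrow> bool" where
  "csubspace S \<longleftrightarrow> 0 \<in> S \<and> (\<forall>x\<in>S. \<forall>y\<in>S. x + y \<in> S) \<and> (\<forall>c. \<forall>x\<in>S. scaleC c x \<in> S)"

definition closed_subspaces :: "'a::complex_inner set set" where
  "closed_subspaces = {S. csubspace S \<and> closed S}"

definition proj :: "'a::complex_inner set \<Rightarrow> 'a \<Rightarrow> 'a" where
  "proj S \<psi> = (THE p. p \<in> S \<and> (\<forall>s\<in>S. cinner s (\<psi> - p) = 0))"

definition ray :: "'a::complex_inner \<Rightarrow> 'a set" where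
  "ray \<psi> = range (\<lambda>c. scaleC c \<psi>)"

definition rays :: "'a::complex_inner set set" where
  "rays = {ray \<psi> | \<psi>. \<psi> \<noteq> 0}"

definition ray_rep :: "'a::complex_inner set \<Rightarrow> 'a" where
  "ray_rep R = (SOME \<psi>. \<psi> \<noteq> 0 \<and> R = ray \<psi>)"

text \<open>\<open>e_H([\<psi>],S) = \<parallel>P_S \<psi>\<parallel>^2 / \<parallel>\<psi>\<parallel>^2\<close> (independent of the chosen representative).\<close>
definition ebar :: "'a::complex_inner set \<Rightarrow> 'a set \<Rightarrow> real" where
  "ebar R S = (norm (proj S (ray_rep R)))\<^sup>2 / (norm (ray_rep R))\<^sup>2"

definition chu_morphism ::
  "'x set \<Rightarrow> 'a set \<Rightarrow> ('x \<Rightarrow> 'a \<Rightarrow> real) \<Rightarrow> 'y set \<Rightarrow> 'b set \<Rightarrow> ('y \<Rightarrow> 'b \<Rightarrow> real)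
   \<Rightarrow> ('x \<Rightarrow> 'y) \<Rightarrow> ('b \<Rightarrow> 'a) \<Rightarrow> bool" where
  "chu_morphism X A e X' A' e' fl fu \<longleftrightarrow>
     (\<forall>x\<in>X. fl x \<in> X') \<and> (\<forall>a\<in>A'. fu a \<in> A) \<and>
     (\<forall>x\<in>X. \<forall>a\<in>A'. e x (fu a) = e' (fl x) a)"

definition cdim_gt_2 :: "'a::complex_inner itself \<Rightarrow> bool" where
  "cdim_gt_2 _ \<longleftrightarrow> (\<exists>x y z :: 'a. \<forall>a b c.
      scaleC a x + scaleC b y + scaleC c z = 0 \<longrightarrow> a = 0 \<and> b = 0 \<and> c = 0)"

definition semiunitary :: "('a::complex_inner \<Rightarrow> 'b::complex_inner) \<Rightarrow> bool" where
  "semiunitary U \<longleftrightarrow> bij U \<and> (\<forall>\<phi> \<psi>. U (\<phi> + \<psi>) = U \<phi> + U \<psi>) \<and>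
     (\<exists>\<sigma>. (\<sigma> = id \<or> \<sigma> = cnj) \<and>
        (\<forall>c \<phi>. U (scaleC c \<phi>) = scaleC (\<sigma> c) (U \<phi>)) \<and>
        (\<forall>\<phi> \<psi>. cinner (U \<phi>) (U \<psi>) = \<sigma> (cinner \<phi> \<psi>)))"

end

theory Submission
  imports Defs
begin

text \<open>The Chu condition for \<open>S\<close> a ray says that \<open>f\<^sup>*\<close> pulls \<open>f\<^sub>*[\<psi>]\<close> back to \<open>[\<psi>]\<close>, so any choice of
  representatives \<open>F \<psi> \<in> f\<^sub>*[\<psi>]\<close> preserves transition probabilities
  \<open>|\<langle>\<phi>,\<psi>\<rangle>|\<^sup>2 / (\<parallel>\<phi>\<parallel>\<^sup>2 \<parallel>\<psi>\<parallel>\<^sup>2)\<close>; \<open>f\<^sup>*\<close> also forces \<open>f\<^sub>*\<close> to be onto the rays.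
  This is Wigner's situation. Fix a unit vector \<open>e\<close> and rescale \<open>F\<close> on the hyperplane \<open>\<langle>e,x\<rangle> = 1\<close>
  so that \<open>\<langle>e',F x\<rangle> = 1\<close>; the induced map \<open>W\<close> on \<open>e\<^sup>\<bottom>\<close> keeps orthonormal pairs orthonormal, and the
  moduli \<open>|s|\<close>, \<open>|1 + s|\<close>, \<open>|1 - \<i>s|\<close> preserved on their span pin down its action on coefficients as
  \<open>s \<mapsto> s\<close> or \<open>s \<mapsto> s\<^sup>*\<close>, the same choice for all vectors. This makes \<open>W\<close>, and its extension \<open>U\<close> by
  \<open>e \<mapsto> e'\<close>, semiunitary. Two semiunitaries inducing the same map on rays differ by scalars that
  additivity forces to agree on any two independent vectors, hence by one phase.\<close>

section \<open>Algebra of complex inner product spaces\<close>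

lemma scaleC_zero_left [simp]: "scaleC 0 (x::'a::complex_inner) = 0"
  using scaleR_scaleC[of 0 x] by simp

lemma scaleC_minus1: "scaleC (-1) (x::'a::complex_inner) = - x"
  using scaleR_scaleC[of "-1" x] by simp

lemma scaleC_zero_right [simp]: "scaleC c (0::'a::complex_inner) = 0"
  by (metis mult_zero_right scaleC_scaleC scaleC_zero_left)

lemma scaleC_minus_left: "scaleC (-c) (x::'a::complex_inner) = - scaleC c x"
  by (metis add.right_inverse add_eq_0_iff scaleC_add_left scaleC_zero_left)

lemma scaleC_minus_right: "scaleC c (- (x::'a::complex_inner)) = - scaleC c x"
  by (metis mult.commute mult_minus1_right scaleC_minus1 scaleC_minus_left scaleC_scaleC)

lemma scaleC_diff_left: "scaleC (b - c) (x::'a::complex_inner) = scaleC b x - scaleC c x"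
  by (metis diff_conv_add_uminus scaleC_add_left scaleC_minus_left)

lemma scaleC_diff_right: "scaleC c (x - (y::'a::complex_inner)) = scaleC c x - scaleC c y"
  by (metis diff_conv_add_uminus scaleC_add_right scaleC_minus_right)

lemma cinner_add_right: "cinner (x::'a::complex_inner) (y + z) = cinner x y + cinner x z"
  by (metis cinner_add_left cinner_commute complex_cnj_add)

lemma cinner_scaleC_right: "cinner (x::'a::complex_inner) (scaleC c y) = c * cinner x y"
  by (metis cinner_commute cinner_scaleC_left complex_cnj_cnj complex_cnj_mult)

lemma cinner_zero_left [simp]: "cinner 0 (x::'a::complex_inner) = 0"
  by (metis cinner_scaleC_left complex_cnj_zero mult_zero_left scaleC_zero_left)

lemma cinner_zero_right [simp]: "cinner (x::'a::complex_inner) 0 = 0"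
  by (metis cinner_commute cinner_zero_left complex_cnj_zero)

lemma cinner_minus_left: "cinner (- x) (y::'a::complex_inner) = - cinner x y"
  by (metis cinner_scaleC_left complex_cnj_minus complex_cnj_one mult_minus1 scaleC_minus1)

lemma cinner_minus_right: "cinner (x::'a::complex_inner) (- y) = - cinner x y"
  by (metis cinner_scaleC_right mult_minus1 scaleC_minus1)

lemma cinner_diff_left: "cinner (x - y) (z::'a::complex_inner) = cinner x z - cinner y z"
  using cinner_add_left[of x "-y" z] cinner_minus_left[of y z] by simp

lemma cinner_diff_right: "cinner (x::'a::complex_inner) (y - z) = cinner x y - cinner x z"
  using cinner_add_right[of x y "-z"] cinner_minus_right[of x z] by simp

lemmas cinner_simps = cinner_add_left cinner_add_right cinner_diff_left cinner_diff_right
  cinner_scaleC_left cinner_scaleC_right cinner_minus_left cinner_minus_right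

declare cinner_eq_zero_iff [simp] scaleC_one [simp]

lemma cinner_cnj: "cnj (cinner x (y::'a::complex_inner)) = cinner y x"
  using cinner_commute[of y x] by simp

lemma cinner_eq_zero_sym: "cinner x y = 0 \<Longrightarrow> cinner y (x::'a::complex_inner) = 0"
  by (metis cinner_cnj complex_cnj_zero)

lemma cmod_cinner_commute: "cmod (cinner x (y::'a::complex_inner)) = cmod (cinner y x)"
  using cinner_commute[of x y] complex_mod_cnj by simp

lemma cinner_self_eq_norm_sq: "cinner (x::'a::complex_inner) x = complex_of_real ((norm x)\<^sup>2)"
proof -
  have "Im (cinner x x) = 0"
    using cinner_commute[of x x] by (metis cnj.simps(2) neg_equal_zero)
  moreover have "(norm x)\<^sup>2 = Re (cinner x x)"
    using norm_eq_sqrt_cinner[of x] cinner_ge_zero[of x] by simp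
  ultimately show ?thesis by (simp add: complex_eq_iff)
qed

lemma cmod_cinner_self: "cmod (cinner x (x::'a::complex_inner)) = (norm x)\<^sup>2"
  by (simp add: cinner_self_eq_norm_sq norm_power)

lemma norm_eq_iff_cinner_self_eq:
  "norm (x::'a::complex_inner) = norm (y::'b::complex_inner) \<longleftrightarrow> cinner x x = cinner y y"
  by (metis cinner_self_eq_norm_sq norm_ge_zero of_real_eq_iff power2_eq_iff_nonneg)

lemma norm_eq_1_of_cinner_self: "cinner w (w::'a::complex_inner) = 1 \<Longrightarrow> norm w = 1"
  using norm_eq_sqrt_cinner[of w] by simp

lemma norm_scaleC: "norm (scaleC c (x::'a::complex_inner)) = cmod c * norm x"
proof -
  have "complex_of_real ((norm (scaleC c x))\<^sup>2) = cnj c * c * complex_of_real ((norm x)\<^sup>2)"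
    unfolding cinner_self_eq_norm_sq[symmetric] by (simp add: cinner_scaleC_left cinner_scaleC_right)
  also have "cnj c * c = complex_of_real ((cmod c)\<^sup>2)"
    by (metis complex_norm_square mult.commute)
  finally have "(norm (scaleC c x))\<^sup>2 = (cmod c * norm x)\<^sup>2"
    by (metis of_real_eq_iff of_real_mult power_mult_distrib)
  then show ?thesis by (simp add: power2_eq_iff_nonneg)
qed

lemma scaleC_eq_0_iff [simp]: "scaleC c (x::'a::complex_inner) = 0 \<longleftrightarrow> c = 0 \<or> x = 0"
  by (metis norm_eq_zero norm_scaleC mult_eq_0_iff norm_eq_zero zero_less_norm_iff)

lemma scaleC_cancel_right: "scaleC a (x::'a::complex_inner) = scaleC b x \<longleftrightarrow> a = b \<or> x = 0"
  by (metis eq_iff_diff_eq_0 scaleC_diff_left scaleC_eq_0_iff)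

lemma norm_add_sq_cinner:
  "(norm (x + y))\<^sup>2 = (norm x)\<^sup>2 + (norm y)\<^sup>2 + 2 * Re (cinner x (y::'a::complex_inner))"
proof -
  have "Re (cinner y x) = Re (cinner x y)" by (simp flip: cinner_cnj[of x y])
  then have "Re (cinner (x + y) (x + y)) = Re (cinner x x) + Re (cinner y y) + 2 * Re (cinner x y)"
    by (simp add: cinner_simps)
  then show ?thesis by (simp add: cinner_self_eq_norm_sq)
qed

lemma norm_add_Pythagorean_cinner:
  "cinner x (y::'a::complex_inner) = 0 \<Longrightarrow> (norm (x + y))\<^sup>2 = (norm x)\<^sup>2 + (norm y)\<^sup>2"
  by (simp add: norm_add_sq_cinner)

lemma Re_cinner_eq_of_norm_eq:
  fixes a b :: "'a::complex_inner" and c d :: "'b::complex_inner"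
  assumes "norm a = norm c" "norm b = norm d" "norm (a + b) = norm (c + d)"
  shows "Re (cinner a b) = Re (cinner c d)"
  using norm_add_sq_cinner[of a b] norm_add_sq_cinner[of c d] assms by simp

lemma cinner_residual_eq_0:
  fixes a b :: "'a::complex_inner"
  assumes "a \<noteq> 0"
  shows "cinner a (b - scaleC (cinner a b / cinner a a) a) = 0"
  using assms by (simp add: cinner_simps)

lemma cmod_cinner_sq_eq_residual:
  fixes a b :: "'a::complex_inner"
  assumes a: "a \<noteq> 0"
  defines "c \<equiv> cinner a b / cinner a a"
  shows "(cmod (cinner a b))\<^sup>2 = (norm a)\<^sup>2 * ((norm b)\<^sup>2 - (norm (b - scaleC c a))\<^sup>2)"
proof -
  have "cinner (scaleC c a) (b - scaleC c a) = 0"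
    using cinner_residual_eq_0[OF a, of b] by (simp add: c_def cinner_scaleC_left)
  then have "(norm b)\<^sup>2 = (norm (scaleC c a))\<^sup>2 + (norm (b - scaleC c a))\<^sup>2"
    using norm_add_Pythagorean_cinner by fastforce
  moreover have "(norm (scaleC c a))\<^sup>2 * (norm a)\<^sup>2 = (cmod (cinner a b))\<^sup>2"
    using a by (simp add: c_def norm_scaleC norm_divide cmod_cinner_self power_mult_distrib
        power_divide field_simps power2_eq_square)
  ultimately show ?thesis by (simp add: algebra_simps)
qed

lemma Cauchy_Schwarz_cinner: "cmod (cinner a (b::'a::complex_inner)) \<le> norm a * norm b"
proof (cases "a = 0")
  case False
  then have "(cmod (cinner a b))\<^sup>2 \<le> (norm a * norm b)\<^sup>2"
    using cmod_cinner_sq_eq_residual[OF False, of b] by (simp add: power_mult_distrib mult_left_mono)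
  then show ?thesis by (simp add: power2_le_iff_abs_le)
qed simp

lemma Cauchy_Schwarz_cinner_eq_imp_parallel:
  fixes a b :: "'a::complex_inner"
  assumes "a \<noteq> 0" and "(cmod (cinner a b))\<^sup>2 = (norm a)\<^sup>2 * (norm b)\<^sup>2"
  shows "b = scaleC (cinner a b / cinner a a) a"
  using cmod_cinner_sq_eq_residual[OF assms(1), of b] assms by (simp add: algebra_simps)

lemma orthonormal_expansion:
  fixes y :: "'a::complex_inner"
  assumes "\<forall>w\<in>set ws. cinner w w = 1" and "sorted_wrt (\<lambda>v w. cinner v w = 0) ws"
    and "(norm y)\<^sup>2 = (\<Sum>w\<leftarrow>ws. (cmod (cinner w y))\<^sup>2)"
  shows "y = (\<Sum>w\<leftarrow>ws. scaleC (cinner w y) w)"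
  using assms
proof (induction ws arbitrary: y)
  case Nil
  then show ?case by simp
next
  case (Cons w ws)
  define r where "r = y - scaleC (cinner w y) w"
  have w: "cinner w w = 1" using Cons.prems(1) by simp
  have coeff: "cinner v r = cinner v y" if "v \<in> set ws" for v
    using Cons.prems(2) that cinner_eq_zero_sym by (fastforce simp: r_def cinner_simps)
  have "(norm r)\<^sup>2 = (norm y)\<^sup>2 - (cmod (cinner w y))\<^sup>2"
    using cmod_cinner_sq_eq_residual[of w y] w
    by (fastforce simp: r_def norm_eq_1_of_cinner_self)
  also have "\<dots> = (\<Sum>v\<leftarrow>ws. (cmod (cinner v r))\<^sup>2)"
    using Cons.prems(3) coeff by (simp cong: map_cong)
  finally have "r = (\<Sum>v\<leftarrow>ws. scaleC (cinner v r) v)"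
    using Cons by (intro Cons.IH) auto
  also have "\<dots> = (\<Sum>v\<leftarrow>ws. scaleC (cinner v y) v)"
    using coeff by (simp cong: map_cong)
  finally show ?case by (simp add: r_def algebra_simps)
qed

lemma unit_vector_decomposition:
  fixes p :: "'a::complex_inner"
  assumes "p \<noteq> 0"
  obtains u c where "cinner u u = 1" and "c \<noteq> 0" and "p = scaleC c u"
proof
  define u where "u = scaleC (complex_of_real (1 / norm p)) p"
  show "p = scaleC (complex_of_real (norm p)) u"
    using assms by (simp add: u_def scaleC_scaleC flip: of_real_mult)
  have "cinner u u = complex_of_real (1 / norm p) * complex_of_real (1 / norm p) * cinner p p"
    by (simp add: u_def cinner_scaleC_left cinner_scaleC_right)
  also have "\<dots> = 1"
    using assms by (simp add: cinner_self_eq_norm_sq power2_eq_square)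
  finally show "cinner u u = 1" .
qed (use assms in simp)

text \<open>The cross product of the two coefficient rows solves the system unless they are proportional.\<close>

lemma homogeneous_2x3_nontrivial_solution:
  fixes p1 p2 p3 q1 q2 q3 :: complex
  shows "\<exists>a b c. (a \<noteq> 0 \<or> b \<noteq> 0 \<or> c \<noteq> 0) \<and> a * p1 + b * p2 + c * p3 = 0 \<and> a * q1 + b * q2 + c * q3 = 0"
proof (cases "p2 * q3 - p3 * q2 \<noteq> 0 \<or> p3 * q1 - p1 * q3 \<noteq> 0 \<or> p1 * q2 - p2 * q1 \<noteq> 0")
  case True
  show ?thesis
    by (rule exI[of _ "p2 * q3 - p3 * q2"], rule exI[of _ "p3 * q1 - p1 * q3"],
        rule exI[of _ "p1 * q2 - p2 * q1"]) (use True in \<open>auto simp: algebra_simps\<close>)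
next
  case False
  then have minor: "p1 * q2 = p2 * q1" by auto
  consider "p1 \<noteq> 0 \<or> p2 \<noteq> 0" | "q1 \<noteq> 0 \<or> q2 \<noteq> 0" | "p1 = 0" "p2 = 0" "q1 = 0" "q2 = 0"
    by blast
  then show ?thesis
  proof cases
    case 1
    then show ?thesis
      by (intro exI[of _ "- p2"] exI[of _ p1] exI[of _ 0]) (auto simp: minor algebra_simps)
  next
    case 2
    then show ?thesis
      by (intro exI[of _ "- q2"] exI[of _ q1] exI[of _ 0]) (auto simp: minor algebra_simps)
  next
    case 3
    then show ?thesis by (intro exI[of _ 1] exI[of _ 0]) auto
  qed
qed

lemma cdim_gt_2_ex_orthogonal:
  assumes "cdim_gt_2 TYPE('a::complex_inner)"
  shows "\<exists>v::'a. v \<noteq> 0 \<and> cinner a v = 0 \<and> cinner b v = 0"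
proof -
  obtain x y z :: 'a
    where indep: "\<And>p q r. scaleC p x + scaleC q y + scaleC r z = 0 \<Longrightarrow> p = 0 \<and> q = 0 \<and> r = 0"
    using assms unfolding cdim_gt_2_def by blast
  obtain \<alpha> \<beta> \<gamma> where nontrivial: "\<alpha> \<noteq> 0 \<or> \<beta> \<noteq> 0 \<or> \<gamma> \<noteq> 0"
    and "\<alpha> * cinner a x + \<beta> * cinner a y + \<gamma> * cinner a z = 0"
    and "\<alpha> * cinner b x + \<beta> * cinner b y + \<gamma> * cinner b z = 0"
    using homogeneous_2x3_nontrivial_solution[of "cinner a x" "cinner a y" "cinner a z"
        "cinner b x" "cinner b y" "cinner b z"] by blast
  moreover have "scaleC \<alpha> x + scaleC \<beta> y + scaleC \<gamma> z \<noteq> 0"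
    using indep nontrivial by blast
  ultimately show ?thesis
    by (intro exI[of _ "scaleC \<alpha> x + scaleC \<beta> y + scaleC \<gamma> z"]) (simp add: cinner_simps)
qed

lemma cdim_gt_2_ex_unit_orthogonal:
  assumes "cdim_gt_2 TYPE('a::complex_inner)"
  shows "\<exists>u::'a. cinner u u = 1 \<and> cinner a u = 0 \<and> cinner b u = 0"
proof -
  obtain v :: 'a where v: "v \<noteq> 0" "cinner a v = 0" "cinner b v = 0"
    using cdim_gt_2_ex_orthogonal[OF assms] by blast
  obtain u c where "cinner u u = 1" "c \<noteq> 0" "v = scaleC c u"
    using unit_vector_decomposition[OF v(1)] .
  then show ?thesis using v by (auto simp: cinner_scaleC_right)
qed

section \<open>Rays, projections and transition probabilities\<close>

lemma mem_ray_iff: "x \<in> ray a \<longleftrightarrow> (\<exists>c. x = scaleC c (a::'a::complex_inner))"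
  by (auto simp: ray_def)

lemma ray_self: "a \<in> ray (a::'a::complex_inner)"
  unfolding mem_ray_iff by (metis scaleC_one)

lemma zero_in_ray: "0 \<in> ray (a::'a::complex_inner)"
  unfolding mem_ray_iff by (metis scaleC_zero_left)

lemma ray_scaleC: "c \<noteq> 0 \<Longrightarrow> ray (scaleC c a) = ray (a::'a::complex_inner)"
proof
  assume c: "c \<noteq> 0"
  show "ray (scaleC c a) \<subseteq> ray a"
    by (auto simp: mem_ray_iff scaleC_scaleC)
  show "ray a \<subseteq> ray (scaleC c a)"
  proof
    fix x assume "x \<in> ray a"
    then obtain d where "x = scaleC d a" by (auto simp: mem_ray_iff)
    then have "x = scaleC (d / c) (scaleC c a)" using c by (simp add: scaleC_scaleC)
    then show "x \<in> ray (scaleC c a)" by (auto simp: mem_ray_iff)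
  qed
qed

lemma ray_eq_of_mem: "b \<in> ray a \<Longrightarrow> b \<noteq> 0 \<Longrightarrow> ray b = ray (a::'a::complex_inner)"
  by (metis mem_ray_iff ray_scaleC scaleC_eq_0_iff)

lemma ray_in_rays: "a \<noteq> 0 \<Longrightarrow> ray a \<in> rays"
  by (auto simp: rays_def)

lemma ray_rep: "R \<in> rays \<Longrightarrow> ray_rep R \<noteq> 0 \<and> R = ray (ray_rep R)"
  unfolding ray_rep_def rays_def by (rule someI_ex) blast

lemma csubspace_ray: "csubspace (ray (a::'a::complex_inner))"
  unfolding csubspace_def
proof (intro conjI ballI allI)
  fix x y assume "x \<in> ray a" "y \<in> ray a"
  then obtain c d where "x = scaleC c a" "y = scaleC d a" by (auto simp: mem_ray_iff)
  then have "x + y = scaleC (c + d) a" by (simp add: scaleC_add_left)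
  then show "x + y \<in> ray a" unfolding mem_ray_iff by blast
next
  fix k x assume "x \<in> ray a"
  then obtain c where "x = scaleC c a" by (auto simp: mem_ray_iff)
  then have "scaleC k x = scaleC (k * c) a" by (simp add: scaleC_scaleC)
  then show "scaleC k x \<in> ray a" unfolding mem_ray_iff by blast
qed (rule zero_in_ray)

lemma csubspace_eq_ray:
  assumes "csubspace T" and "T \<subseteq> ray a" and "T \<noteq> {0::'a::complex_inner}"
  shows "T = ray a"
proof
  obtain z where z: "z \<in> T" "z \<noteq> 0"
    using assms(1,3) unfolding csubspace_def by blast
  then obtain c where "z = scaleC c a"
    using assms(2) mem_ray_iff by blast
  moreover from this have "c \<noteq> 0" using z(2) by auto
  ultimately have "scaleC d a = scaleC (d / c) z" for d
    by (simp add: scaleC_scaleC)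
  then show "ray a \<subseteq> T"
    using assms(1) z(1) unfolding csubspace_def by (auto simp: mem_ray_iff)
qed (use assms in blast)

lemma closed_ray: "closed (ray (a::'a::complex_inner))"
proof (cases "a = 0")
  case True
  then have "ray a = {0}" by (auto simp: mem_ray_iff)
  then show ?thesis by simp
next
  case False
  define h where "h x = x - scaleC (cinner a x / cinner a a) a" for x
  have "ray a = h -` {0}"
    using False by (auto simp: mem_ray_iff h_def cinner_simps scaleC_scaleC)
  moreover have "bounded_linear h"
  proof (rule bounded_linear_intro[where K=2])
    fix x y show "h (x + y) = h x + h y"
      by (simp add: h_def cinner_simps add_divide_distrib scaleC_add_left)
  next
    fix r x show "h (scaleR r x) = scaleR r (h x)"
      by (simp add: h_def scaleR_scaleC cinner_simps scaleC_diff_right scaleC_scaleC)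
  next
    fix x
    have "norm (scaleC (cinner a x / cinner a a) a) = cmod (cinner a x) / (norm a)\<^sup>2 * norm a"
      by (simp add: norm_scaleC norm_divide cmod_cinner_self)
    also have "\<dots> \<le> norm a * norm x / (norm a)\<^sup>2 * norm a"
      by (intro mult_right_mono divide_right_mono Cauchy_Schwarz_cinner) auto
    also have "\<dots> = norm x" using False by (simp add: power2_eq_square)
    finally show "norm (h x) \<le> norm x * 2"
      unfolding h_def using norm_triangle_ineq4[of x "scaleC (cinner a x / cinner a a) a"] by linarith
  qed
  ultimately show ?thesis
    by (auto intro: continuous_closed_vimage linear_continuous_at)
qed

lemma ray_in_closed_subspaces: "ray (a::'a::complex_inner) \<in> closed_subspaces"
  by (simp add: closed_subspaces_def csubspace_ray closed_ray)

lemma proj_unique: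
  assumes "csubspace S" "p \<in> S" "\<forall>s\<in>S. cinner s (\<psi> - p) = 0"
  shows "proj S \<psi> = (p::'a::complex_inner)"
  unfolding proj_def
proof (rule the_equality)
  fix q assume q: "q \<in> S \<and> (\<forall>s\<in>S. cinner s (\<psi> - q) = 0)"
  have "q - p \<in> S" using assms(1,2) q unfolding csubspace_def
    by (metis diff_conv_add_uminus scaleC_minus1)
  then have "cinner (q - p) ((\<psi> - p) - (\<psi> - q)) = 0"
    using assms q by (simp add: cinner_diff_right)
  then show "q = p" by simp
qed (use assms in auto)

lemma proj_ray: "a \<noteq> 0 \<Longrightarrow> proj (ray a) \<psi> = scaleC (cinner a \<psi> / cinner a a) (a::'a::complex_inner)"
  by (rule proj_unique) (auto simp: csubspace_ray mem_ray_iff cinner_simps)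

lemma proj_eq_self: "csubspace S \<Longrightarrow> \<psi> \<in> S \<Longrightarrow> proj S \<psi> = (\<psi>::'a::complex_inner)"
  by (rule proj_unique) auto

lemma proj_zero_subspace: "proj {0} \<psi> = (0::'a::complex_inner)"
  by (rule proj_unique) (auto simp: csubspace_def)

definition trans_prob :: "'a::complex_inner \<Rightarrow> 'a \<Rightarrow> real" where
  "trans_prob a b = (cmod (cinner a b))\<^sup>2 / ((norm a)\<^sup>2 * (norm b)\<^sup>2)"

lemma trans_prob_commute: "trans_prob a b = trans_prob b a"
  by (simp add: trans_prob_def cmod_cinner_commute mult.commute)

lemma trans_prob_scaleC_left: "c \<noteq> 0 \<Longrightarrow> trans_prob (scaleC c a) b = trans_prob a b"
  by (simp add: trans_prob_def cinner_scaleC_left norm_scaleC norm_mult power_mult_distrib)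

lemma trans_prob_ray_cong:
  "a' \<in> ray a \<Longrightarrow> a' \<noteq> 0 \<Longrightarrow> b' \<in> ray b \<Longrightarrow> b' \<noteq> 0 \<Longrightarrow> trans_prob a' b' = trans_prob a b"
  by (metis mem_ray_iff scaleC_eq_0_iff trans_prob_scaleC_left trans_prob_commute)

lemma trans_prob_self: "a \<noteq> 0 \<Longrightarrow> trans_prob a a = 1"
  by (simp add: trans_prob_def cmod_cinner_self power2_eq_square)

lemma trans_prob_eq_0_iff: "a \<noteq> 0 \<Longrightarrow> b \<noteq> 0 \<Longrightarrow> trans_prob a b = 0 \<longleftrightarrow> cinner a b = 0"
  by (simp add: trans_prob_def)

lemma trans_prob_eq_1_imp_ray_eq:
  assumes "a \<noteq> 0" "b \<noteq> 0" "trans_prob a b = 1"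
  shows "ray b = ray a"
proof -
  have "(cmod (cinner a b))\<^sup>2 = (norm a)\<^sup>2 * (norm b)\<^sup>2"
    using assms by (simp add: trans_prob_def)
  then have "b \<in> ray a"
    using Cauchy_Schwarz_cinner_eq_imp_parallel assms(1) by (fastforce simp: mem_ray_iff)
  then show ?thesis using assms(2) by (rule ray_eq_of_mem)
qed

lemma cmod_cinner_eq_of_trans_prob_eq:
  "trans_prob a b = trans_prob x y \<Longrightarrow> norm a = norm x \<Longrightarrow> norm b = norm y \<Longrightarrow> x \<noteq> 0 \<Longrightarrow> y \<noteq> 0
    \<Longrightarrow> cmod (cinner a b) = cmod (cinner x (y::'a::complex_inner))"
  by (simp add: trans_prob_def power2_eq_iff_nonneg)

lemma ebar_ray: "a \<noteq> 0 \<Longrightarrow> b \<noteq> 0 \<Longrightarrow> ebar (ray a) (ray b) = trans_prob b (a::'a::complex_inner)"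
proof -
  assume a: "a \<noteq> 0" and b: "b \<noteq> 0"
  define r where "r = ray_rep (ray a)"
  have r: "r \<noteq> 0" "r \<in> ray a" using ray_rep[OF ray_in_rays[OF a]] ray_self by (metis r_def)+
  have "ebar (ray a) (ray b) = (norm (scaleC (cinner b r / cinner b b) b))\<^sup>2 / (norm r)\<^sup>2"
    unfolding ebar_def r_def[symmetric] proj_ray[OF b] ..
  also have "\<dots> = trans_prob b r"
    using b by (simp add: trans_prob_def norm_scaleC norm_divide cmod_cinner_self power_divide
        power_mult_distrib field_simps power2_eq_square)
  also have "\<dots> = trans_prob b a" using trans_prob_ray_cong[OF ray_self b r(2,1)] .
  finally show ?thesis .
qed

lemma ebar_eq_1_of_mem: "csubspace T \<Longrightarrow> a \<noteq> 0 \<Longrightarrow> a \<in> T \<Longrightarrow> ebar (ray a) T = 1"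
proof -
  assume T: "csubspace T" and a: "a \<noteq> 0" "a \<in> T"
  define r where "r = ray_rep (ray a)"
  have r: "r \<noteq> 0" "r \<in> ray a" using ray_rep[OF ray_in_rays[OF a(1)]] ray_self by (metis r_def)+
  then have "r \<in> T" using T a unfolding csubspace_def mem_ray_iff by auto
  then show ?thesis using r proj_eq_self[OF T] unfolding ebar_def r_def[symmetric] by simp
qed

lemma ebar_zero_subspace: "ebar (ray a) {0::'a::complex_inner} = 0"
  by (simp add: ebar_def proj_zero_subspace)

lemma csubspace_ex_nonzero: "csubspace T \<Longrightarrow> T \<noteq> {0} \<Longrightarrow> \<exists>z\<in>T. z \<noteq> (0::'a::complex_inner)"
  unfolding csubspace_def by blast

section \<open>Chu morphisms induce transition-probability preserving maps\<close>

locale chu_ray_morphism =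
  fixes fl :: "'h::complex_inner set \<Rightarrow> 'k::complex_inner set" and fu :: "'k set \<Rightarrow> 'h set"
  assumes chu: "chu_morphism rays closed_subspaces ebar rays closed_subspaces ebar fl fu"
    and inj: "inj_on fl rays"
begin

definition lift :: "'h \<Rightarrow> 'k" where "lift x = ray_rep (fl (ray x))"

lemma lift_nonzero: "x \<noteq> 0 \<Longrightarrow> lift x \<noteq> 0"
  and fl_ray: "x \<noteq> 0 \<Longrightarrow> fl (ray x) = ray (lift x)"
  using chu ray_rep ray_in_rays unfolding lift_def chu_morphism_def by blast+

lemma csubspace_fu: "S \<in> closed_subspaces \<Longrightarrow> csubspace (fu S)"
  using chu by (simp add: chu_morphism_def closed_subspaces_def)

lemma ebar_fu:
  assumes "x \<noteq> 0" "S \<in> closed_subspaces"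
  shows "ebar (ray x) (fu S) = ebar (ray (lift x)) S"
proof -
  have "ebar (ray x) (fu S) = ebar (fl (ray x)) S"
    using chu ray_in_rays[OF assms(1)] assms(2) unfolding chu_morphism_def by blast
  then show ?thesis using fl_ray[OF assms(1)] by simp
qed

lemma ray_lift_eq_of_mem_fu:
  assumes "z \<in> fu (ray v)" "z \<noteq> 0" "v \<noteq> 0"
  shows "ray (lift z) = ray v"
proof -
  have "ebar (ray (lift z)) (ray v) = 1"
    using ebar_fu[OF assms(2) ray_in_closed_subspaces]
      ebar_eq_1_of_mem[OF csubspace_fu[OF ray_in_closed_subspaces] assms(2,1)] by simp
  then show ?thesis
    using ebar_ray[OF lift_nonzero[OF assms(2)] assms(3)]
      trans_prob_eq_1_imp_ray_eq[OF assms(3) lift_nonzero[OF assms(2)]] by simp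
qed

lemma fu_ray_lift:
  assumes x: "x \<noteq> 0"
  shows "fu (ray (lift x)) = ray x"
proof (rule csubspace_eq_ray)
  show "fu (ray (lift x)) \<subseteq> ray x"
  proof
    fix z assume z: "z \<in> fu (ray (lift x))"
    show "z \<in> ray x"
    proof (cases "z = 0")
      case False
      then have "fl (ray z) = fl (ray x)"
        using ray_lift_eq_of_mem_fu[OF z _ lift_nonzero[OF x]] fl_ray x by simp
      then have "ray z = ray x" using inj ray_in_rays False x by (auto dest: inj_onD)
      then show ?thesis using ray_self by metis
    qed (simp add: zero_in_ray)
  qed
  have "ebar (ray x) (fu (ray (lift x))) = 1"
    using ebar_fu[OF x ray_in_closed_subspaces] ebar_ray[OF lift_nonzero[OF x] lift_nonzero[OF x]]
      trans_prob_self[OF lift_nonzero[OF x]] by simp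
  then show "fu (ray (lift x)) \<noteq> {0}"
    using ebar_zero_subspace[of x] by fastforce
qed (rule csubspace_fu[OF ray_in_closed_subspaces])

lemma trans_prob_lift: "x \<noteq> 0 \<Longrightarrow> y \<noteq> 0 \<Longrightarrow> trans_prob (lift x) (lift y) = trans_prob x y"
  using ebar_fu[OF _ ray_in_closed_subspaces, of y "lift x"] fu_ray_lift[of x]
    ebar_ray[of y x] ebar_ray[OF lift_nonzero lift_nonzero, of y x] by simp

lemma ray_lift_scaleC: "x \<noteq> 0 \<Longrightarrow> c \<noteq> 0 \<Longrightarrow> ray (lift (scaleC c x)) = ray (lift x)"
  using fl_ray[of x] fl_ray[of "scaleC c x"] ray_scaleC[of c x] by simp

lemma cinner_lift_eq_0_of_fu_eq_0:
  assumes "fu (ray v) = {0}" "v \<noteq> 0" "y \<noteq> 0"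
  shows "cinner v (lift y) = 0"
proof -
  have "trans_prob v (lift y) = 0"
    using ebar_fu[OF assms(3) ray_in_closed_subspaces, of v] assms(1)
      ebar_zero_subspace[of y] ebar_ray[OF lift_nonzero[OF assms(3)] assms(2)] by simp
  then show ?thesis using trans_prob_eq_0_iff[OF assms(2) lift_nonzero[OF assms(3)]] by simp
qed

text \<open>Surjectivity on rays comes from \<open>f\<^sup>*\<close>: were \<open>f\<^sup>*[w] = 0\<close>, the whole image of \<open>f\<^sub>*\<close> would be
  orthogonal to \<open>w\<close>, and then \<open>f\<^sup>*[w + u]\<close>, for \<open>u\<close> in the image, could be neither zero nor nonzero.\<close>

lemma fu_ray_nonzero:
  fixes x0 :: 'h
  assumes x0: "x0 \<noteq> 0" and w: "w \<noteq> 0"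
  shows "fu (ray w) \<noteq> {0}"
proof
  assume w0: "fu (ray w) = {0}"
  define u where "u = lift x0"
  have u: "u \<noteq> 0" "cinner w u = 0"
    using lift_nonzero[OF x0] cinner_lift_eq_0_of_fu_eq_0[OF w0 w x0] by (simp_all add: u_def)
  then have wu: "cinner w (w + u) = cinner w w" "cinner (w + u) u = cinner u u"
    using cinner_eq_zero_sym by (simp_all add: cinner_simps)
  then have "w + u \<noteq> 0" using w by auto
  have "fu (ray (w + u)) \<noteq> {0}"
    using cinner_lift_eq_0_of_fu_eq_0[OF _ \<open>w + u \<noteq> 0\<close> x0] wu(2) u(1) by (auto simp: u_def)
  then obtain z where z: "z \<in> fu (ray (w + u))" "z \<noteq> 0"
    using csubspace_ex_nonzero[OF csubspace_fu[OF ray_in_closed_subspaces]] by blast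
  have "w + u \<in> ray (lift z)"
    using ray_lift_eq_of_mem_fu[OF z \<open>w + u \<noteq> 0\<close>] ray_self by metis
  then obtain c where "w + u = scaleC c (lift z)" by (auto simp: mem_ray_iff)
  then have "cinner w (w + u) = 0"
    using cinner_lift_eq_0_of_fu_eq_0[OF w0 w z(2)] by (simp add: cinner_scaleC_right)
  then show False using wu(1) w by simp
qed

lemma lift_surj_on_rays: "(x0::'h) \<noteq> 0 \<Longrightarrow> w \<noteq> 0 \<Longrightarrow> \<exists>x. x \<noteq> 0 \<and> ray w = ray (lift x)"
  using fu_ray_nonzero csubspace_ex_nonzero[OF csubspace_fu[OF ray_in_closed_subspaces]]
    ray_lift_eq_of_mem_fu by metis

end

section \<open>Wigner's theorem\<close>

lemma Re_eq_of_cmod_eq: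
  assumes "cmod a = cmod b" and "cmod (1 + a) = cmod (1 + b)"
  shows "Re a = Re b"
proof -
  have "(cmod (1 + z))\<^sup>2 = 1 + 2 * Re z + (cmod z)\<^sup>2" for z
    using cmod_power2[of "1 + z"] cmod_power2[of z] by (simp add: power2_eq_square algebra_simps)
  moreover have "(cmod a)\<^sup>2 = (cmod b)\<^sup>2" "(cmod (1 + a))\<^sup>2 = (cmod (1 + b))\<^sup>2"
    using assms by simp_all
  ultimately show ?thesis by (metis add_right_cancel add_left_cancel mult_cancel_left zero_neq_numeral)
qed

lemma eq_pm_i_of_cmod_eq:
  assumes "cmod t = 1" and "cmod (1 + t) = cmod (1 + \<i>)"
  shows "t = \<i> \<or> t = - \<i>"
proof -
  have "Re t = 0" using Re_eq_of_cmod_eq[of t \<i>] assms by simp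
  moreover have "(Re t)\<^sup>2 + (Im t)\<^sup>2 = 1" using assms(1) cmod_power2[of t] by simp
  ultimately have "Im t = 1 \<or> Im t = -1" by (simp add: power2_eq_1_iff)
  with \<open>Re t = 0\<close> show ?thesis by (auto simp: complex_eq_iff)
qed

definition cnj_unless :: "bool \<Rightarrow> complex \<Rightarrow> complex" where
  "cnj_unless b = (if b then id else cnj)"

lemma cnj_unless_simps:
  "cnj_unless b (x + y) = cnj_unless b x + cnj_unless b y"
  "cnj_unless b (x - y) = cnj_unless b x - cnj_unless b y"
  "cnj_unless b (x * y) = cnj_unless b x * cnj_unless b y"
  "cnj_unless b (x / y) = cnj_unless b x / cnj_unless b y"
  "cnj_unless b (- x) = - cnj_unless b x"
  "cnj_unless b (complex_of_real r) = complex_of_real r"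
  "cnj_unless b (cnj x) = cnj (cnj_unless b x)"
  "cnj_unless b (cnj_unless b x) = x"
  "cmod (cnj_unless b x) = cmod x"
  "cnj_unless b 1 = 1" "cnj_unless b 0 = 0"
  "cnj_unless b \<i> = (if b then \<i> else - \<i>)"
  "cnj_unless b x = 0 \<longleftrightarrow> x = 0"
  by (auto simp: cnj_unless_def)

lemma cnj_unless_cases: "cnj_unless b = id \<or> cnj_unless b = cnj"
  by (simp add: cnj_unless_def)

lemma cnj_unless_i_eq_iff: "cnj_unless a \<i> = cnj_unless b \<i> \<longleftrightarrow> a = b"
  by (auto simp: cnj_unless_def complex_eq_iff)

text \<open>A complex number is determined up to conjugation by the moduli \<open>|a|\<close> and \<open>|1 + a|\<close>;
  the modulus \<open>|1 + t\<^sup>* a|\<close> for \<open>t = \<plusminus>\<i>\<close> then fixes which of the two it is.\<close>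

lemma eq_cnj_unless_of_cmod_eq:
  assumes "cmod a = cmod s" and "cmod (1 + a) = cmod (1 + s)"
    and t: "t = \<i> \<or> t = - \<i>" and "cmod (1 + cnj t * a) = cmod (1 - \<i> * s)"
  shows "a = cnj_unless (t = \<i>) s"
proof -
  have "Re (cnj t * a) = Re (- \<i> * s)"
    using Re_eq_of_cmod_eq[of "cnj t * a" "- \<i> * s"] t assms by (auto simp: norm_mult)
  then show ?thesis using t Re_eq_of_cmod_eq[OF assms(1,2)]
    by (auto simp: complex_eq_iff cnj_unless_def)
qed

lemma orthonormal_coeffs_unique:
  fixes a b :: "'a::complex_inner"
  assumes "cinner a a = 1" "cinner b b = 1" "cinner a b = 0"
    and "scaleC \<alpha> a + scaleC \<beta> b = scaleC \<gamma> a + scaleC \<delta> b"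
  shows "\<alpha> = \<gamma> \<and> \<beta> = \<delta>"
  using arg_cong[OF assms(4), of "cinner a"] arg_cong[OF assms(4), of "cinner b"]
    assms(1-3) cinner_eq_zero_sym[OF assms(3)] by (simp add: cinner_simps)

locale wigner_map =
  fixes F :: "'h::complex_inner \<Rightarrow> 'k::complex_inner"
  assumes F_nonzero: "x \<noteq> 0 \<Longrightarrow> F x \<noteq> 0"
    and trans_prob_F: "x \<noteq> 0 \<Longrightarrow> y \<noteq> 0 \<Longrightarrow> trans_prob (F x) (F y) = trans_prob x y"
    and ray_F_scaleC: "x \<noteq> 0 \<Longrightarrow> c \<noteq> 0 \<Longrightarrow> ray (F (scaleC c x)) = ray (F x)"
    and dim: "cdim_gt_2 TYPE('h)"
begin

lemma trans_prob_ray_F: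
  "x \<noteq> 0 \<Longrightarrow> y \<noteq> 0 \<Longrightarrow> a \<in> ray (F x) \<Longrightarrow> a \<noteq> 0 \<Longrightarrow> b \<in> ray (F y) \<Longrightarrow> b \<noteq> 0
    \<Longrightarrow> trans_prob a b = trans_prob x y"
  using trans_prob_ray_cong trans_prob_F by metis

end

locale wigner_gauge = wigner_map F for F :: "'h::complex_inner \<Rightarrow> 'k::complex_inner" +
  fixes e :: 'h and e' :: 'k
  assumes e_unit: "cinner e e = 1" and e'_unit: "cinner e' e' = 1" and e'_in_ray: "e' \<in> ray (F e)"
begin

lemma e_nonzero: "e \<noteq> 0" and e'_nonzero: "e' \<noteq> 0" and norm_e: "norm e = 1" and norm_e': "norm e' = 1"
  using e_unit e'_unit norm_eq_1_of_cinner_self by auto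

text \<open>\<open>F\<close> only fixes a ray for each vector. On the hyperplane \<open>\<langle>e,x\<rangle> = 1\<close> the phase is fixed by
  demanding \<open>\<langle>e',F x\<rangle> = 1\<close>; \<open>W\<close> is the map this induces on the orthogonal complement of \<open>e\<close>, and
  it will turn out to be \<open>\<sigma>\<close>-linear and to preserve inner products up to \<open>\<sigma>\<close>.\<close>

definition gauge :: "'h \<Rightarrow> 'k" where "gauge x = scaleC (1 / cinner e' (F x)) (F x)"

definition W :: "'h \<Rightarrow> 'k" where "W p = gauge (e + p) - e'"

lemma trans_prob_e: "cinner e x = 1 \<Longrightarrow> trans_prob e x = 1 / (norm x)\<^sup>2"
  using norm_e by (simp add: trans_prob_def)

lemma cinner_e'_F_nonzero:
  assumes "cinner e x = 1"
  shows "cinner e' (F x) \<noteq> 0"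
proof -
  have x: "x \<noteq> 0" using assms by auto
  have "trans_prob e' (F x) = trans_prob e x"
    using trans_prob_ray_F[OF e_nonzero x e'_in_ray e'_nonzero ray_self F_nonzero[OF x]] .
  also have "\<dots> \<noteq> 0" using trans_prob_e[OF assms] x by simp
  finally show ?thesis using trans_prob_eq_0_iff[OF e'_nonzero F_nonzero[OF x]] by simp
qed

lemma cinner_e'_gauge: "cinner e x = 1 \<Longrightarrow> cinner e' (gauge x) = 1"
  using cinner_e'_F_nonzero by (simp add: gauge_def cinner_scaleC_right)

lemma gauge_in_ray_F: "gauge x \<in> ray (F x)"
  by (auto simp: gauge_def mem_ray_iff)

lemma gauge_nonzero: "cinner e x = 1 \<Longrightarrow> gauge x \<noteq> 0"
  using cinner_e'_gauge by fastforce

lemma trans_prob_gauge: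
  assumes "y \<noteq> 0" "a \<in> ray (F y)" "a \<noteq> 0" "cinner e x = 1"
  shows "trans_prob a (gauge x) = trans_prob y x"
proof -
  have "x \<noteq> 0" using assms(4) by auto
  then show ?thesis using trans_prob_ray_F[OF assms(1) _ assms(2,3) gauge_in_ray_F gauge_nonzero[OF assms(4)]]
    by blast
qed

lemma norm_gauge:
  assumes "cinner e x = 1"
  shows "norm (gauge x) = norm x"
proof -
  have "trans_prob e' (gauge x) = trans_prob e x"
    using trans_prob_gauge[OF e_nonzero e'_in_ray e'_nonzero assms] .
  then have "1 / (norm (gauge x))\<^sup>2 = 1 / (norm x)\<^sup>2"
    using trans_prob_e[OF assms] cinner_e'_gauge[OF assms] norm_e' by (simp add: trans_prob_def)
  then show ?thesis by (simp add: power2_eq_iff_nonneg)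
qed

lemma cmod_cinner_gauge:
  assumes "w \<noteq> 0" "a \<in> ray (F w)" "norm a = norm w" "cinner e x = 1"
  shows "cmod (cinner a (gauge x)) = cmod (cinner w x)"
  using cmod_cinner_eq_of_trans_prob_eq[OF trans_prob_gauge[OF assms(1,2) _ assms(4)]]
    assms norm_gauge[OF assms(4)] by fastforce

lemma cinner_e_e_plus: "cinner e p = 0 \<Longrightarrow> cinner e (e + p) = 1"
  using e_unit by (simp add: cinner_simps)

lemma gauge_e_plus: "gauge (e + p) = e' + W p"
  by (simp add: W_def)

lemma cinner_e'_W: "cinner e p = 0 \<Longrightarrow> cinner e' (W p) = 0"
  using cinner_e'_gauge[OF cinner_e_e_plus] e'_unit by (simp add: W_def cinner_simps)

lemma cinner_W_e': "cinner e p = 0 \<Longrightarrow> cinner (W p) e' = 0"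
  using cinner_e'_W cinner_eq_zero_sym by blast

lemma norm_W:
  assumes p: "cinner e p = 0"
  shows "norm (W p) = norm p"
proof -
  have "1 + (norm (W p))\<^sup>2 = (norm (e' + W p))\<^sup>2"
    using norm_add_Pythagorean_cinner[OF cinner_e'_W[OF p]] norm_e' by simp
  also have "\<dots> = (norm (e + p))\<^sup>2" using norm_gauge[OF cinner_e_e_plus[OF p]] gauge_e_plus by simp
  also have "\<dots> = 1 + (norm p)\<^sup>2" using norm_add_Pythagorean_cinner[OF p] norm_e by simp
  finally show ?thesis by (simp add: power2_eq_iff_nonneg)
qed

lemma cinner_W_self: "cinner e p = 0 \<Longrightarrow> cinner (W p) (W p) = cinner p p"
  using norm_W norm_eq_iff_cinner_self_eq by blast

lemma W_zero: "W 0 = 0"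
  using norm_W[of 0] by simp

lemma cmod_one_plus_cinner_W:
  assumes p: "cinner e p = 0" and q: "cinner e q = 0"
  shows "cmod (1 + cinner (W p) (W q)) = cmod (1 + cinner p q)"
proof -
  have "cinner (e' + W p) (e' + W q) = 1 + cinner (W p) (W q)"
    using e'_unit cinner_e'_W[OF q] cinner_W_e'[OF p] by (simp add: cinner_simps)
  moreover have "cinner (e + p) (e + q) = 1 + cinner p q"
    using e_unit q cinner_eq_zero_sym[OF p] by (simp add: cinner_simps)
  moreover have "norm (e + p) = norm (gauge (e + p))" "norm (e + q) = norm (gauge (e + q))"
    using norm_gauge cinner_e_e_plus p q by metis+
  ultimately show ?thesis
    using cmod_cinner_gauge[OF _ gauge_in_ray_F _ cinner_e_e_plus[OF q], of "e + p"]
      cinner_e_e_plus[OF p] gauge_e_plus by fastforce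
qed

lemma W_in_ray_F:
  assumes u: "cinner u u = 1" and eu: "cinner e u = 0"
  shows "W u \<in> ray (F u)"
proof -
  have "u \<noteq> 0" using u by auto
  obtain w c where w: "cinner w w = 1" and "c \<noteq> 0" "F u = scaleC c w"
    using unit_vector_decomposition[OF F_nonzero[OF \<open>u \<noteq> 0\<close>]] .
  have "w \<noteq> 0" using w by auto
  have ray_w: "ray w = ray (F u)"
    using ray_scaleC \<open>c \<noteq> 0\<close> \<open>F u = scaleC c w\<close> by metis
  then have w_in: "w \<in> ray (F u)" using ray_self by metis
  have "trans_prob e' w = trans_prob e u"
    using trans_prob_ray_F[OF e_nonzero \<open>u \<noteq> 0\<close> e'_in_ray e'_nonzero w_in \<open>w \<noteq> 0\<close>] .
  then have e'w: "cinner e' w = 0"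
    using eu trans_prob_eq_0_iff[OF e'_nonzero \<open>w \<noteq> 0\<close>] by (simp add: trans_prob_def)
  define y where "y = gauge (e + u)"
  have "cinner u (e + u) = 1" using u cinner_eq_zero_sym[OF eu] by (simp add: cinner_simps)
  then have "cmod (cinner w y) = 1"
    using cmod_cinner_gauge[OF \<open>u \<noteq> 0\<close> w_in _ cinner_e_e_plus[OF eu]]
      norm_eq_1_of_cinner_self[OF w] norm_eq_1_of_cinner_self[OF u] by (simp add: y_def)
  moreover have "(norm y)\<^sup>2 = 2"
    using norm_gauge[OF cinner_e_e_plus[OF eu]] norm_add_Pythagorean_cinner[OF eu] norm_e
      norm_eq_1_of_cinner_self[OF u] by (simp add: y_def)
  ultimately have "y = scaleC (cinner e' y) e' + scaleC (cinner w y) w"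
    using orthonormal_expansion[of "[e', w]" y] e'_unit w e'w
      cinner_e'_gauge[OF cinner_e_e_plus[OF eu]] by (simp add: y_def)
  then have "W u = scaleC (cinner w y) w"
    using cinner_e'_gauge[OF cinner_e_e_plus[OF eu]] unfolding W_def y_def
    by (metis add_diff_cancel_left' scaleC_one)
  then have "W u \<in> ray w" by (auto simp: mem_ray_iff)
  then show ?thesis using ray_w by simp
qed

definition orthonormal_perp_e :: "'h \<Rightarrow> 'h \<Rightarrow> bool" where
  "orthonormal_perp_e u v \<longleftrightarrow>
     cinner u u = 1 \<and> cinner v v = 1 \<and> cinner u v = 0 \<and> cinner e u = 0 \<and> cinner e v = 0"

lemma orthonormal_perp_eD:
  assumes "orthonormal_perp_e u v"
  shows "cinner u u = 1" "cinner v v = 1" "cinner u v = 0" "cinner v u = 0"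
    "cinner e u = 0" "cinner e v = 0" "cinner u e = 0" "cinner v e = 0"
  using assms cinner_eq_zero_sym unfolding orthonormal_perp_e_def by blast+

lemma orthonormal_perp_e_commute: "orthonormal_perp_e u v \<Longrightarrow> orthonormal_perp_e v u"
  using orthonormal_perp_eD unfolding orthonormal_perp_e_def by blast

lemma ex_orthonormal_perp_e: "cinner u u = 1 \<Longrightarrow> cinner e u = 0 \<Longrightarrow> \<exists>v. orthonormal_perp_e u v"
  using cdim_gt_2_ex_unit_orthogonal[OF dim, of e u] by (auto simp: orthonormal_perp_e_def)

lemma W_unit: "cinner u u = 1 \<Longrightarrow> cinner e u = 0 \<Longrightarrow> cinner (W u) (W u) = 1"
  using cinner_W_self by simp

lemma W_nonzero: "cinner u u = 1 \<Longrightarrow> cinner e u = 0 \<Longrightarrow> W u \<noteq> 0"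
  using W_unit by fastforce

lemma cinner_W_orthonormal:
  assumes "orthonormal_perp_e u v"
  shows "cinner (W u) (W v) = 0"
proof -
  note uv = orthonormal_perp_eD[OF assms]
  have "u \<noteq> 0" "v \<noteq> 0" using uv by auto
  then have "trans_prob (W u) (W v) = trans_prob u v"
    using trans_prob_ray_F W_in_ray_F W_nonzero uv by blast
  then show ?thesis
    using uv trans_prob_eq_0_iff W_nonzero trans_prob_eq_0_iff[OF \<open>u \<noteq> 0\<close> \<open>v \<noteq> 0\<close>] by metis
qed

lemma cmod_cinner_W_gauge:
  assumes "cinner w w = 1" "cinner e w = 0" "cinner e x = 1"
  shows "cmod (cinner (W w) (gauge x)) = cmod (cinner w x)"
  using cmod_cinner_gauge[OF _ W_in_ray_F[OF assms(1,2)] norm_W[OF assms(2)] assms(3)] assms(1)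
  by fastforce

text \<open>The coefficients of \<open>gauge (e + q)\<close> along \<open>e', W u, W v\<close> have the moduli of those of \<open>e + q\<close>
  along \<open>e, u, v\<close>, which exhaust its norm.\<close>

lemma W_expansion:
  fixes s t :: complex
  assumes uv: "orthonormal_perp_e u v"
  defines "q \<equiv> scaleC s u + scaleC t v"
  shows "W q = scaleC (cinner (W u) (W q)) (W u) + scaleC (cinner (W v) (W q)) (W v)"
    and "cmod (cinner (W u) (W q)) = cmod s"
proof -
  note uv = orthonormal_perp_eD[OF uv]
  have eq: "cinner e q = 0" using uv by (simp add: q_def cinner_simps)
  define x where "x = e + q"
  have ex: "cinner e x = 1" unfolding x_def by (rule cinner_e_e_plus[OF eq])
  have y: "gauge x = e' + W q" unfolding x_def by (rule gauge_e_plus)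
  have "complex_of_real ((norm x)\<^sup>2) = cinner x x" by (simp add: cinner_self_eq_norm_sq)
  also have "\<dots> = 1 + cnj s * s + cnj t * t"
    using uv e_unit cinner_eq_zero_sym[OF eq] by (simp add: x_def q_def cinner_simps)
  also have "\<dots> = complex_of_real (1 + (cmod s)\<^sup>2 + (cmod t)\<^sup>2)"
    using complex_norm_square[of s] complex_norm_square[of t] by (simp add: algebra_simps)
  finally have "(norm x)\<^sup>2 = 1 + (cmod s)\<^sup>2 + (cmod t)\<^sup>2" by (simp only: of_real_eq_iff)
  moreover have cu: "cmod (cinner (W u) (gauge x)) = cmod s"
    using cmod_cinner_W_gauge[OF uv(1,5) ex] uv by (simp add: x_def q_def cinner_simps)
  moreover have "cmod (cinner (W v) (gauge x)) = cmod t"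
    using cmod_cinner_W_gauge[OF uv(2,6) ex] uv by (simp add: x_def q_def cinner_simps)
  ultimately have norm_eq: "(norm (gauge x))\<^sup>2 = (cmod (cinner e' (gauge x)))\<^sup>2
      + (cmod (cinner (W u) (gauge x)))\<^sup>2 + (cmod (cinner (W v) (gauge x)))\<^sup>2"
    using cinner_e'_gauge[OF ex] norm_gauge[OF ex] by simp
  have Wu: "cinner (W u) (gauge x) = cinner (W u) (W q)"
    and Wv: "cinner (W v) (gauge x) = cinner (W v) (W q)"
    using y cinner_W_e' uv by (simp_all add: cinner_simps)
  from norm_eq have "gauge x = e' + scaleC (cinner (W u) (gauge x)) (W u) + scaleC (cinner (W v) (gauge x)) (W v)"
    using orthonormal_expansion[of "[e', W u, W v]" "gauge x"] e'_unit W_unit cinner_e'_W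
      cinner_W_orthonormal[OF assms(1)] cinner_e'_gauge[OF ex] uv by (simp add: add.assoc)
  then show "W q = scaleC (cinner (W u) (W q)) (W u) + scaleC (cinner (W v) (W q)) (W v)"
    using y Wu Wv by (simp add: add.assoc)
  show "cmod (cinner (W u) (W q)) = cmod s"
    using Wu cu by simp
qed

definition W_linear_at :: "'h \<Rightarrow> bool" where
  "W_linear_at u \<longleftrightarrow> W (scaleC \<i> u) = scaleC \<i> (W u)"

lemma W_scaleC_i:
  assumes u: "cinner u u = 1" "cinner e u = 0"
  shows "W (scaleC \<i> u) = scaleC (cnj_unless (W_linear_at u) \<i>) (W u)"
proof -
  obtain v where uv: "orthonormal_perp_e u v" using ex_orthonormal_perp_e[OF u] by blast
  define \<tau> where "\<tau> = cinner (W u) (W (scaleC \<i> u))"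
  have "cmod (cinner (W v) (W (scaleC 0 v + scaleC \<i> u))) = 0"
    using W_expansion(2)[OF orthonormal_perp_e_commute[OF uv], of 0 \<i>] by simp
  then have W_iu: "W (scaleC \<i> u) = scaleC \<tau> (W u)"
    using W_expansion(1)[OF uv, of \<i> 0] by (simp add: \<tau>_def)
  have "cmod \<tau> = 1" using W_expansion(2)[OF uv, of \<i> 0] by (simp add: \<tau>_def)
  moreover have "cmod (1 + \<tau>) = cmod (1 + \<i>)"
    using cmod_one_plus_cinner_W[of u "scaleC \<i> u"] u by (simp add: \<tau>_def cinner_simps)
  ultimately have "\<tau> = \<i> \<or> \<tau> = - \<i>" by (rule eq_pm_i_of_cmod_eq)
  moreover have "W_linear_at u \<longleftrightarrow> \<tau> = \<i>"
    using W_iu W_nonzero[OF u] by (simp add: W_linear_at_def scaleC_cancel_right)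
  ultimately show ?thesis using W_iu by (auto simp: cnj_unless_simps)
qed

lemma cinner_W_combination:
  assumes uv: "orthonormal_perp_e u v"
  shows "cinner (W u) (W (scaleC s u + scaleC t v)) = cnj_unless (W_linear_at u) s"
proof -
  note uv' = orthonormal_perp_eD[OF uv]
  define q where "q = scaleC s u + scaleC t v"
  define \<tau> where "\<tau> = cnj_unless (W_linear_at u) \<i>"
  have eq: "cinner e q = 0" and e_iu: "cinner e (scaleC \<i> u) = 0"
    using uv' by (simp_all add: q_def cinner_simps)
  have "cmod (cinner (W u) (W q)) = cmod s" using W_expansion(2)[OF uv] by (simp add: q_def)
  moreover have "cmod (1 + cinner (W u) (W q)) = cmod (1 + s)"
    using cmod_one_plus_cinner_W[OF uv'(5) eq] uv' by (simp add: q_def cinner_simps)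
  moreover have "\<tau> = \<i> \<or> \<tau> = - \<i>" by (simp add: \<tau>_def cnj_unless_simps)
  moreover have "cmod (1 + cnj \<tau> * cinner (W u) (W q)) = cmod (1 - \<i> * s)"
    using cmod_one_plus_cinner_W[OF e_iu eq] W_scaleC_i[OF uv'(1,5)] uv'
    by (simp add: \<tau>_def q_def cinner_simps mult.commute)
  ultimately have "cinner (W u) (W q) = cnj_unless (\<tau> = \<i>) s" by (rule eq_cnj_unless_of_cmod_eq)
  then show ?thesis by (simp add: \<tau>_def q_def cnj_unless_simps)
qed

lemma W_combination:
  assumes "orthonormal_perp_e u v"
  shows "W (scaleC s u + scaleC t v)
    = scaleC (cnj_unless (W_linear_at u) s) (W u) + scaleC (cnj_unless (W_linear_at v) t) (W v)"
  using W_expansion(1)[OF assms, of s t] cinner_W_combination[OF assms, of s t]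
    cinner_W_combination[OF orthonormal_perp_e_commute[OF assms], of t s] by (simp add: add.commute)

lemma W_scaleC_unit_at:
  assumes "cinner u u = 1" "cinner e u = 0"
  shows "W (scaleC s u) = scaleC (cnj_unless (W_linear_at u) s) (W u)"
proof -
  obtain v where "orthonormal_perp_e u v" using ex_orthonormal_perp_e[OF assms] by blast
  from W_combination[OF this, of s 0] show ?thesis by (simp add: cnj_unless_simps)
qed

text \<open>Compare the coefficients of \<open>W (\<i>u + \<i>v)\<close> computed along \<open>u, v\<close> with those computed along the
  unit vector \<open>(u + v)/\<surd>2\<close>.\<close>

lemma W_linear_at_eq:
  assumes uv: "orthonormal_perp_e u v"
  shows "W_linear_at u = W_linear_at v"
proof -
  note uv' = orthonormal_perp_eD[OF uv]
  define r where "r = complex_of_real (1 / sqrt 2)"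
  define w where "w = scaleC r u + scaleC r v"
  have "cnj r * r * 2 = 1"
    by (simp add: r_def power2_eq_square[symmetric] power_divide flip: of_real_power)
  then have w: "cinner w w = 1" "cinner e w = 0"
    using uv' by (simp_all add: w_def cinner_simps algebra_simps)
  have Ww: "W w = scaleC r (W u) + scaleC r (W v)"
    using W_combination[OF uv, of r r] by (simp add: w_def r_def cnj_unless_simps)
  have "scaleC \<i> u + scaleC \<i> v = scaleC (\<i> * complex_of_real (sqrt 2)) w"
    by (simp add: w_def r_def scaleC_add_right scaleC_scaleC)
  then have "W (scaleC \<i> u + scaleC \<i> v)
      = scaleC (cnj_unless (W_linear_at w) \<i>) (W u) + scaleC (cnj_unless (W_linear_at w) \<i>) (W v)"
    using W_scaleC_unit_at[OF w] by (simp add: Ww cnj_unless_simps scaleC_add_right scaleC_scaleC r_def)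
  then have "cnj_unless (W_linear_at u) \<i> = cnj_unless (W_linear_at w) \<i>
      \<and> cnj_unless (W_linear_at v) \<i> = cnj_unless (W_linear_at w) \<i>"
    using W_combination[OF uv, of \<i> \<i>] orthonormal_coeffs_unique[OF W_unit W_unit
        cinner_W_orthonormal[OF uv]] uv' by simp
  then show ?thesis by (simp add: cnj_unless_i_eq_iff)
qed

lemma ex_orthonormal_perp_e_decomposition:
  assumes u: "cinner u u = 1" "cinner e u = 0" and q: "cinner e q = 0"
  obtains v a b where "orthonormal_perp_e u v" and "q = scaleC a u + scaleC b v"
proof -
  define r where "r = q - scaleC (cinner u q) u"
  have r: "cinner u r = 0" "cinner e r = 0" using u q by (simp_all add: r_def cinner_simps)
  show ?thesis
  proof (cases "r = 0")
    case True
    obtain v where "orthonormal_perp_e u v" using ex_orthonormal_perp_e[OF u] by blast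
    then show ?thesis using that[of v "cinner u q" 0] True by (simp add: r_def)
  next
    case False
    obtain v c where v: "cinner v v = 1" "c \<noteq> 0" "r = scaleC c v"
      using unit_vector_decomposition[OF False] .
    then have "orthonormal_perp_e u v"
      using u r by (simp add: orthonormal_perp_e_def cinner_scaleC_right)
    moreover have "q = scaleC (cinner u q) u + scaleC c v"
      using v(3) unfolding r_def by (metis add.commute diff_add_cancel)
    ultimately show ?thesis by (rule that)
  qed
qed

text \<open>By \<open>W_linear_at_u0\<close> below any unit vector of \<open>e\<^sup>\<bottom>\<close> serves to define \<open>\<sigma>\<close>.\<close>

definition u0 :: 'h where "u0 = (SOME u. cinner u u = 1 \<and> cinner e u = 0)"

lemma u0: "cinner u0 u0 = 1" "cinner e u0 = 0"
  using someI_ex[OF cdim_gt_2_ex_unit_orthogonal[OF dim, of e e]] by (simp_all add: u0_def)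

definition \<sigma> :: "complex \<Rightarrow> complex" where "\<sigma> = cnj_unless (W_linear_at u0)"

lemma \<sigma>_simps:
  "\<sigma> (x + y) = \<sigma> x + \<sigma> y" "\<sigma> (x - y) = \<sigma> x - \<sigma> y" "\<sigma> (x * y) = \<sigma> x * \<sigma> y"
  "\<sigma> (complex_of_real r) = complex_of_real r" "\<sigma> (cnj x) = cnj (\<sigma> x)" "\<sigma> (\<sigma> x) = x" "\<sigma> 0 = 0"
  by (simp_all add: \<sigma>_def cnj_unless_simps)

lemma \<sigma>_cases: "\<sigma> = id \<or> \<sigma> = cnj"
  by (simp add: \<sigma>_def cnj_unless_cases)

lemma W_scaleC_unit:
  assumes u: "cinner u u = 1" "cinner e u = 0"
  shows "W (scaleC s u) = scaleC (\<sigma> s) (W u)"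
proof -
  obtain v a b where uv: "orthonormal_perp_e u0 v" and u_eq: "u = scaleC a u0 + scaleC b v"
    using ex_orthonormal_perp_e_decomposition[OF u0 u(2)] .
  have W_comb: "W (scaleC c u0 + scaleC d v) = scaleC (\<sigma> c) (W u0) + scaleC (\<sigma> d) (W v)" for c d
    using W_combination[OF uv] W_linear_at_eq[OF uv] by (simp add: \<sigma>_def)
  have "W (scaleC s u) = W (scaleC (s * a) u0 + scaleC (s * b) v)"
    by (simp add: u_eq scaleC_scaleC scaleC_add_right)
  also have "\<dots> = scaleC (\<sigma> s) (scaleC (\<sigma> a) (W u0) + scaleC (\<sigma> b) (W v))"
    by (simp add: W_comb \<sigma>_simps scaleC_scaleC scaleC_add_right)
  also have "scaleC (\<sigma> a) (W u0) + scaleC (\<sigma> b) (W v) = W u"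
    by (simp add: W_comb u_eq)
  finally show ?thesis .
qed

lemma W_linear_at_u0: "cinner u u = 1 \<Longrightarrow> cinner e u = 0 \<Longrightarrow> W_linear_at u = W_linear_at u0"
  using W_scaleC_unit[of u \<i>] W_scaleC_unit_at[of u \<i>] W_nonzero[of u]
  by (simp add: \<sigma>_def scaleC_cancel_right cnj_unless_i_eq_iff)

lemma W_combination_\<sigma>:
  "orthonormal_perp_e u v \<Longrightarrow> W (scaleC s u + scaleC t v) = scaleC (\<sigma> s) (W u) + scaleC (\<sigma> t) (W v)"
  using W_combination W_linear_at_u0 by (simp add: orthonormal_perp_e_def \<sigma>_def)

lemma W_scaleC:
  assumes p: "cinner e p = 0"
  shows "W (scaleC c p) = scaleC (\<sigma> c) (W p)"
proof (cases "p = 0")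
  case False
  obtain u n where u: "cinner u u = 1" and "n \<noteq> 0" and p_eq: "p = scaleC n u"
    using unit_vector_decomposition[OF False] .
  then have "cinner e u = 0" using p by (simp add: cinner_scaleC_right)
  then show ?thesis
    using W_scaleC_unit[OF u] by (simp add: p_eq \<sigma>_simps scaleC_scaleC)
qed (simp add: W_zero)

lemma W_add:
  assumes p: "cinner e p = 0" and q: "cinner e q = 0"
  shows "W (p + q) = W p + W q"
proof (cases "p = 0")
  case False
  obtain u n where u: "cinner u u = 1" and "n \<noteq> 0" and p_eq: "p = scaleC n u"
    using unit_vector_decomposition[OF False] .
  then have "cinner e u = 0" using p by (simp add: cinner_scaleC_right)
  then obtain v a b where uv: "orthonormal_perp_e u v" and q_eq: "q = scaleC a u + scaleC b v"
    using ex_orthonormal_perp_e_decomposition[OF u _ q] by blast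
  have "W (p + q) = W (scaleC (n + a) u + scaleC b v)"
    by (simp add: p_eq q_eq scaleC_add_left add.assoc)
  also have "\<dots> = scaleC (\<sigma> (n + a)) (W u) + scaleC (\<sigma> b) (W v)"
    by (rule W_combination_\<sigma>[OF uv])
  also have "\<dots> = W p + W q"
    using W_combination_\<sigma>[OF uv] W_combination_\<sigma>[OF uv, of _ 0]
    by (simp add: p_eq q_eq \<sigma>_simps scaleC_add_left add.assoc)
  finally show ?thesis .
qed (simp add: W_zero)

lemma cinner_W:
  assumes p: "cinner e p = 0" and q: "cinner e q = 0"
  shows "cinner (W p) (W q) = \<sigma> (cinner p q)"
proof -
  have iq: "cinner e (scaleC \<i> q) = 0" using q by (simp add: cinner_simps)
  have preserves_Re: "Re (cinner (W p) (W r)) = Re (cinner p r)" if r: "cinner e r = 0" for r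
  proof (rule Re_cinner_eq_of_norm_eq)
    have "cinner e (p + r) = 0" using p r by (simp add: cinner_simps)
    then show "norm (W p + W r) = norm (p + r)" using norm_W W_add[OF p r] by metis
  qed (use norm_W p r in auto)
  have "Re (cinner (W p) (W q)) = Re (cinner p q)"
    using preserves_Re[OF q] .
  moreover have "Re (\<sigma> \<i> * cinner (W p) (W q)) = Re (\<i> * cinner p q)"
    using preserves_Re[OF iq] W_scaleC[OF q] by (simp add: cinner_simps)
  ultimately show ?thesis
    using \<sigma>_cases by (elim disjE) (simp_all add: complex_eq_iff)
qed

definition perp_e :: "'h \<Rightarrow> 'h" where "perp_e x = x - scaleC (cinner e x) e"

lemma cinner_e_perp_e: "cinner e (perp_e x) = 0"
  using e_unit by (simp add: perp_e_def cinner_simps)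

definition U :: "'h \<Rightarrow> 'k" where "U x = scaleC (\<sigma> (cinner e x)) e' + W (perp_e x)"

lemma U_add: "U (x + y) = U x + U y"
proof -
  have "perp_e (x + y) = perp_e x + perp_e y"
    by (simp add: perp_e_def cinner_simps scaleC_add_left algebra_simps)
  then show ?thesis using W_add[OF cinner_e_perp_e cinner_e_perp_e]
    by (simp add: U_def cinner_simps \<sigma>_simps scaleC_add_left algebra_simps)
qed

lemma U_scaleC: "U (scaleC c x) = scaleC (\<sigma> c) (U x)"
proof -
  have "perp_e (scaleC c x) = scaleC c (perp_e x)"
    by (simp add: perp_e_def cinner_simps scaleC_diff_right scaleC_scaleC)
  then show ?thesis using W_scaleC[OF cinner_e_perp_e]
    by (simp add: U_def cinner_simps \<sigma>_simps scaleC_add_right scaleC_scaleC)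
qed

lemma cinner_U: "cinner (U x) (U y) = \<sigma> (cinner x y)"
proof -
  have "cinner (perp_e x) (perp_e y) = cinner x y - cnj (cinner e x) * cinner e y"
    using e_unit by (simp add: perp_e_def cinner_simps cinner_cnj algebra_simps)
  moreover have "cinner (U x) (U y)
      = cnj (\<sigma> (cinner e x)) * \<sigma> (cinner e y) + cinner (W (perp_e x)) (W (perp_e y))"
    using e'_unit cinner_e'_W[OF cinner_e_perp_e] cinner_W_e'[OF cinner_e_perp_e]
    by (simp add: U_def cinner_simps)
  ultimately show ?thesis
    using cinner_W[OF cinner_e_perp_e cinner_e_perp_e] by (simp add: \<sigma>_simps)
qed

lemma norm_U: "norm (U x) = norm x"
  unfolding norm_eq_iff_cinner_self_eq cinner_U by (simp only: cinner_self_eq_norm_sq \<sigma>_simps)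

lemma U_in_ray_F:
  assumes x: "x \<noteq> 0"
  shows "U x \<in> ray (F x)"
proof (cases "cinner e x = 0")
  case False
  define a where "a = cinner e x"
  define x' where "x' = scaleC (1 / a) x"
  have "a \<noteq> 0" using False by (simp add: a_def)
  then have ex': "cinner e x' = 1" and "perp_e x = scaleC a (perp_e x')"
    by (simp_all add: x'_def a_def perp_e_def cinner_simps scaleC_diff_right scaleC_scaleC)
  moreover have "e + perp_e x' = x'" using ex' by (simp add: perp_e_def)
  ultimately have "U x = scaleC (\<sigma> a) (gauge x')"
    using W_scaleC[OF cinner_e_perp_e] gauge_e_plus[of "perp_e x'"]
    by (simp add: U_def a_def scaleC_add_right)
  moreover have "ray (F x') = ray (F x)"
    unfolding x'_def using ray_F_scaleC[OF x] \<open>a \<noteq> 0\<close> by simp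
  ultimately show ?thesis
    using gauge_in_ray_F[of x'] by (auto simp: mem_ray_iff scaleC_scaleC)
next
  case True
  obtain u n where u: "cinner u u = 1" and "n \<noteq> 0" and x_eq: "x = scaleC n u"
    using unit_vector_decomposition[OF x] .
  then have "cinner e u = 0" using True by (simp add: cinner_scaleC_right)
  have "U x = scaleC (\<sigma> n) (W u)"
    using True W_scaleC_unit[OF u \<open>cinner e u = 0\<close>] by (simp add: U_def perp_e_def \<sigma>_simps x_eq)
  moreover obtain c where "W u = scaleC c (F u)"
    using W_in_ray_F[OF u \<open>cinner e u = 0\<close>] by (auto simp: mem_ray_iff)
  moreover have "ray (F x) = ray (F u)"
    using x_eq ray_F_scaleC[OF _ \<open>n \<noteq> 0\<close>, of u] u by fastforce
  ultimately show ?thesis by (auto simp: mem_ray_iff scaleC_scaleC)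
qed

lemma ray_U: "x \<noteq> 0 \<Longrightarrow> ray (U x) = ray (F x)"
  using U_in_ray_F ray_eq_of_mem norm_U by (metis norm_eq_zero)

lemma U_semiunitary:
  assumes surj: "\<And>w. w \<noteq> 0 \<Longrightarrow> \<exists>x. x \<noteq> 0 \<and> ray w = ray (F x)"
  shows "semiunitary U"
proof -
  have "inj U"
  proof (rule injI)
    fix x y assume "U x = U y"
    moreover have "U (x - y) = U x - U y"
      using U_add[of "x - y" y] by (metis add_diff_cancel diff_add_cancel)
    ultimately show "x = y" using norm_U[of "x - y"] by simp
  qed
  moreover have "w \<in> range U" for w
  proof (cases "w = 0")
    case True
    then show ?thesis using U_scaleC[of 0 0] by (metis \<sigma>_simps(7) rangeI scaleC_zero_left)
  next
    case False
    then obtain x where "x \<noteq> 0" "ray w = ray (F x)" using surj by blast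
    then have "w \<in> ray (U x)" using ray_U ray_self by metis
    then obtain c where "w = scaleC c (U x)" by (auto simp: mem_ray_iff)
    then have "w = U (scaleC (\<sigma> c) x)" by (simp add: U_scaleC \<sigma>_simps)
    then show ?thesis by simp
  qed
  ultimately show ?thesis
    unfolding semiunitary_def bij_def using U_add U_scaleC cinner_U \<sigma>_cases by blast
qed

end

context wigner_map
begin

lemma ex_semiunitary:
  assumes surj: "\<And>w. w \<noteq> 0 \<Longrightarrow> \<exists>x. x \<noteq> 0 \<and> ray w = ray (F x)"
  shows "\<exists>U. semiunitary U \<and> (\<forall>x. x \<noteq> 0 \<longrightarrow> ray (F x) = ray (U x))"
proof -
  obtain e :: 'h where e: "cinner e e = 1" using cdim_gt_2_ex_unit_orthogonal[OF dim] by blast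
  then have "e \<noteq> 0" by auto
  obtain e' c where e': "cinner e' e' = 1" and "c \<noteq> 0" "F e = scaleC c e'"
    using unit_vector_decomposition[OF F_nonzero[OF \<open>e \<noteq> 0\<close>]] by blast
  then have "e' \<in> ray (F e)" using ray_scaleC ray_self by metis
  then interpret wigner_gauge F e e' by unfold_locales (use e e' in auto)
  show ?thesis using U_semiunitary[OF surj] ray_U by metis
qed

end

context chu_ray_morphism
begin

lemma wigner_map_lift: "cdim_gt_2 TYPE('h) \<Longrightarrow> wigner_map lift"
  by unfold_locales (auto simp: lift_nonzero trans_prob_lift ray_lift_scaleC)

end

section \<open>Uniqueness of the semiunitary\<close>

lemma semiunitaryD:
  assumes "semiunitary U"
  obtains \<sigma> where "\<sigma> = id \<or> \<sigma> = cnj" and "inj U"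
    and "\<And>c x. U (scaleC c x) = scaleC (\<sigma> c) (U x)" and "\<And>x y. cinner (U x) (U y) = \<sigma> (cinner x y)"
  using assms unfolding semiunitary_def bij_def by blast

lemma semiunitary_add: "semiunitary U \<Longrightarrow> U (x + y) = U x + U y"
  by (simp add: semiunitary_def)

lemma semiunitary_zero: "semiunitary U \<Longrightarrow> U 0 = 0"
  using semiunitary_add[of U 0 0] by simp

lemma norm_semiunitary:
  assumes "semiunitary (U :: 'a::complex_inner \<Rightarrow> 'b::complex_inner)"
  shows "norm (U x) = norm x"
proof -
  obtain \<sigma> where "\<sigma> = id \<or> \<sigma> = cnj" "cinner (U x) (U x) = \<sigma> (cinner x x)"
    using semiunitaryD[OF assms] by metis
  then show ?thesis by (auto simp: norm_eq_iff_cinner_self_eq cinner_self_eq_norm_sq)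
qed

lemma scaleC_add_eq_0_imp_not_in_ray:
  fixes \<psi> \<phi> :: "'a::complex_inner"
  assumes "\<psi> \<noteq> 0" "\<phi> \<notin> ray \<psi>" "scaleC a \<psi> + scaleC b \<phi> = 0"
  shows "a = 0 \<and> b = 0"
proof -
  have "b = 0"
  proof (rule ccontr)
    assume "b \<noteq> 0"
    have "scaleC b \<phi> = scaleC (- a) \<psi>"
      using assms(3) by (simp add: scaleC_minus_left add_eq_0_iff)
    then have "\<phi> = scaleC (- a / b) \<psi>"
      using \<open>b \<noteq> 0\<close> by (metis divide_inverse mult.commute right_inverse scaleC_one scaleC_scaleC)
    then show False using assms(2) by (auto simp: mem_ray_iff)
  qed
  then show ?thesis using assms(1,3) by simp
qed

lemma semiunitary_scaleC_add_eq_0: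
  fixes U :: "'a::complex_inner \<Rightarrow> 'b::complex_inner"
  assumes U: "semiunitary U" and "\<psi> \<noteq> 0" "\<phi> \<notin> ray \<psi>" "scaleC a (U \<psi>) + scaleC b (U \<phi>) = 0"
  shows "a = 0 \<and> b = 0"
proof -
  obtain \<sigma> where \<sigma>: "\<sigma> = id \<or> \<sigma> = cnj" and "inj U"
    and U_scaleC: "\<And>c x. U (scaleC c x) = scaleC (\<sigma> c) (U x)"
    using semiunitaryD[OF U] by metis
  have \<sigma>\<sigma>: "\<sigma> (\<sigma> c) = c" for c using \<sigma> by auto
  have "U (scaleC (\<sigma> a) \<psi> + scaleC (\<sigma> b) \<phi>) = U 0"
    using assms(4) by (simp add: semiunitary_add[OF U] semiunitary_zero[OF U] U_scaleC \<sigma>\<sigma>)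
  then have "scaleC (\<sigma> a) \<psi> + scaleC (\<sigma> b) \<phi> = 0" using \<open>inj U\<close> by (simp add: inj_eq)
  then show ?thesis using scaleC_add_eq_0_imp_not_in_ray[OF assms(2,3)] \<sigma> by auto
qed

lemma semiunitary_same_factor:
  fixes U V :: "'a::complex_inner \<Rightarrow> 'b::complex_inner"
  assumes U: "semiunitary U" and V: "semiunitary V"
    and rays: "\<forall>\<psi>. \<psi> \<noteq> 0 \<longrightarrow> ray (U \<psi>) = ray (V \<psi>)"
    and "\<psi> \<noteq> 0" "\<phi> \<notin> ray \<psi>" "V \<psi> = scaleC a (U \<psi>)" "V \<phi> = scaleC b (U \<phi>)"
  shows "a = b"
proof -
  have "\<psi> + \<phi> \<noteq> 0"
  proof
    assume "\<psi> + \<phi> = 0"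
    then have "\<phi> = scaleC (-1) \<psi>" by (simp add: scaleC_minus1 add_eq_0_iff)
    then show False using assms(5) by (auto simp: mem_ray_iff)
  qed
  then obtain l where "V (\<psi> + \<phi>) = scaleC l (U (\<psi> + \<phi>))"
    using rays ray_self mem_ray_iff by metis
  then have "scaleC a (U \<psi>) + scaleC b (U \<phi>) = scaleC l (U \<psi>) + scaleC l (U \<phi>)"
    using assms(6,7) by (simp add: semiunitary_add[OF U] semiunitary_add[OF V] scaleC_add_right)
  then have "scaleC (a - l) (U \<psi>) + scaleC (b - l) (U \<phi>) = 0"
    by (simp add: scaleC_diff_left algebra_simps)
  from semiunitary_scaleC_add_eq_0[OF U assms(4,5) this] show ?thesis by simp
qed

lemma semiunitary_unique:
  fixes U V :: "'a::complex_inner \<Rightarrow> 'b::complex_inner"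
  assumes dim: "cdim_gt_2 TYPE('a)" and U: "semiunitary U" and V: "semiunitary V"
    and rays: "\<forall>\<psi>. \<psi> \<noteq> 0 \<longrightarrow> ray (U \<psi>) = ray (V \<psi>)"
  shows "\<exists>c. cmod c = 1 \<and> (\<forall>\<psi>. V \<psi> = scaleC c (U \<psi>))"
proof -
  have factor: "\<exists>l. V \<psi> = scaleC l (U \<psi>)" if "\<psi> \<noteq> 0" for \<psi>
    using rays ray_self mem_ray_iff that by metis
  obtain x0 :: 'a where "x0 \<noteq> 0" using cdim_gt_2_ex_orthogonal[OF dim] by blast
  obtain c where c: "V x0 = scaleC c (U x0)" using factor[OF \<open>x0 \<noteq> 0\<close>] by blast
  have not_in_ray: "z \<notin> ray y" if "z \<noteq> 0" "cinner y z = 0" "y \<noteq> 0" for y z :: 'a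
    using that by (auto simp: mem_ray_iff cinner_scaleC_right)
  have "V \<psi> = scaleC c (U \<psi>)" for \<psi>
  proof (cases "\<psi> = 0")
    case False
    obtain l where l: "V \<psi> = scaleC l (U \<psi>)" using factor[OF False] by blast
    obtain z :: 'a where z: "z \<noteq> 0" "cinner x0 z = 0" "cinner \<psi> z = 0"
      using cdim_gt_2_ex_orthogonal[OF dim] by blast
    obtain m where "V z = scaleC m (U z)" using factor[OF z(1)] by blast
    then have "c = m" "l = m"
      using semiunitary_same_factor[OF U V rays] c l not_in_ray z \<open>x0 \<noteq> 0\<close> False by blast+
    then show ?thesis using l by simp
  qed (simp add: semiunitary_zero[OF U] semiunitary_zero[OF V])
  moreover have "cmod c = 1"
    using c norm_semiunitary[OF U, of x0] norm_semiunitary[OF V, of x0] \<open>x0 \<noteq> 0\<close>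
    by (simp add: norm_scaleC)
  ultimately show ?thesis by blast
qed

theorem theorem3p12:
  fixes fl :: "'h::chilbert set \<Rightarrow> 'k::chilbert set"
    and fu :: "'k set \<Rightarrow> 'h set"
  assumes "cdim_gt_2 TYPE('h)" and "cdim_gt_2 TYPE('k)"
    and "chu_morphism (rays :: 'h set set) (closed_subspaces :: 'h set set) ebar
                      (rays :: 'k set set) (closed_subspaces :: 'k set set) ebar fl fu"
    and "inj_on fl rays"
  shows "\<exists>U :: 'h \<Rightarrow> 'k. semiunitary U \<and> (\<forall>\<psi>. \<psi> \<noteq> 0 \<longrightarrow> fl (ray \<psi>) = ray (U \<psi>)) \<and>
           (\<forall>V :: 'h \<Rightarrow> 'k. semiunitary V \<and> (\<forall>\<psi>. \<psi> \<noteq> 0 \<longrightarrow> fl (ray \<psi>) = ray (V \<psi>)) \<longrightarrow>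
              (\<exists>c. cmod c = 1 \<and> (\<forall>\<psi>. V \<psi> = scaleC c (U \<psi>))))"
proof -
  interpret chu: chu_ray_morphism fl fu using assms(3,4) by unfold_locales
  interpret wigner: wigner_map chu.lift using chu.wigner_map_lift[OF assms(1)] .
  obtain x0 :: 'h where "x0 \<noteq> 0" using cdim_gt_2_ex_orthogonal[OF assms(1)] by blast
  then obtain U where U: "semiunitary U" "\<forall>x. x \<noteq> 0 \<longrightarrow> ray (chu.lift x) = ray (U x)"
    using wigner.ex_semiunitary chu.lift_surj_on_rays by metis
  then have U_rays: "\<forall>\<psi>. \<psi> \<noteq> 0 \<longrightarrow> fl (ray \<psi>) = ray (U \<psi>)" using chu.fl_ray by simp
  have "\<exists>c. cmod c = 1 \<and> (\<forall>\<psi>. V \<psi> = scaleC c (U \<psi>))"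
    if "semiunitary V" "\<forall>\<psi>. \<psi> \<noteq> 0 \<longrightarrow> fl (ray \<psi>) = ray (V \<psi>)" for V :: "'h \<Rightarrow> 'k"
    using semiunitary_unique[OF assms(1) U(1) that(1)] U_rays that(2) by simp
  then show ?thesis using U(1) U_rays by blast
qed

end
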